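(* Let $A,B\in\mathcal{K}_n$. Then $A$ is an endpoint on the line through $A$ and $B$ if and only if for every $\epsilon\in(0,1)$ the convex body $\epsilon B$ is not a summand of $A$.
   Context: A convex body is a closed, bounded, non-empty convex subset of $\mathbb{R}^n$; $\mathcal{K}_n$ is the set of convex bodies in $\mathbb{R}^n$ with Minkowski addition and nonnegative scaling. The support function of $A$ is $h_A(x)=\sup\{a\cdot x: a\in A\}$ and $\mathcal{H}=\{h_A:A\in\mathcal{K}_n\}$. The line through $A$ and $B$ is the set of $X\in\mathcal{K}_n$ with $h_X=(1-t)h_A+th_B$ for some $t\in\mathbb{R}$; $A$ is an endpoint on this line if there is no $t<0$ with $(1-t)h_A+th_B\in\mathcal{H}$ (i.e. the line contains no convex body on the opposite side of $A$ from $B$). For $K,L\in\mathcal{K}_n$, $L$ is a summand of $K$ if there is $M\in\mathcal{K}_n$ with $L+M=K$. *)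

theory Defs
  imports "HOL-Analysis.Analysis"
begin

definition convex_body :: "'a::euclidean_space set \<Rightarrow> bool" where
  "convex_body A \<longleftrightarrow> closed A \<and> bounded A \<and> A \<noteq> {} \<and> convex A"

definition support_fun :: "'a::euclidean_space set \<Rightarrow> 'a \<Rightarrow> real" where
  "support_fun A x = Sup ((\<lambda>a. a \<bullet> x) ` A)"

definition support_funs :: "('a::euclidean_space \<Rightarrow> real) set" where
  "support_funs = {support_fun A | A. convex_body A}"

definition minkowski_sum :: "'a::euclidean_space set \<Rightarrow> 'a set \<Rightarrow> 'a set" where
  "minkowski_sum A B = {a + b | a b. a \<in> A \<and> b \<in> B}"

definition is_summand :: "'a::euclidean_space set \<Rightarrow> 'a set \<Rightarrow> bool" where
  "is_summand L K \<longleftrightarrow> (\<exists>M. convex_body M \<and> minkowski_sum L M = K)"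

definition is_endpoint :: "'a::euclidean_space set \<Rightarrow> 'a set \<Rightarrow> bool" where
  "is_endpoint A B \<longleftrightarrow>
     \<not> (\<exists>t::real. t < 0 \<and>
          (\<lambda>x. (1 - t) * support_fun A x + t * support_fun B x) \<in> support_funs)"

end

theory Submission
  imports Defs
begin

text \<open>
  With \<open>t = -e/(1 - e)\<close>, the negative values of \<open>t\<close> correspond exactly to \<open>e \<in> (0,1)\<close>,
  and \<open>h\<^sub>C = (1 - t) h\<^sub>A + t h\<^sub>B\<close> is equivalent to \<open>h\<^sub>A = e h\<^sub>B + (1 - e) h\<^sub>C\<close>.
  Since support functions are additive under Minkowski sums, positively homogeneous, and
  determine a convex body (by the separating hyperplane theorem), the latter says
  \<open>A = e B + (1 - e) C\<close>. So a convex body on the line beyond \<open>A\<close> exists iff \<open>e B\<close> is a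
  summand of \<open>A\<close> for some \<open>e \<in> (0,1)\<close>, the complementary summand being \<open>(1 - e) C\<close>.
\<close>

lemma bdd_above_inner_image: "bounded S \<Longrightarrow> bdd_above ((\<lambda>z. z \<bullet> x) ` S)"
  by (intro bounded_imp_bdd_above bounded_linear_image bounded_linear_inner_left)

lemma minkowski_sum_eq_UN: "minkowski_sum A B = (\<Union>a\<in>A. \<Union>b\<in>B. {a + b})"
  unfolding minkowski_sum_def by auto

lemma convex_body_iff_compact: "convex_body A \<longleftrightarrow> compact A \<and> convex A \<and> A \<noteq> {}"
  unfolding convex_body_def compact_eq_bounded_closed by auto

lemma convex_body_scaling: "convex_body A \<Longrightarrow> convex_body ((\<lambda>x. c *\<^sub>R x) ` A)"
  unfolding convex_body_iff_compact by (simp add: compact_scaling convex_scaling)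

lemma convex_body_minkowski_sum:
  "convex_body A \<Longrightarrow> convex_body B \<Longrightarrow> convex_body (minkowski_sum A B)"
  unfolding convex_body_iff_compact minkowski_sum_eq_UN by (auto simp: compact_sums' convex_sums)

lemma support_fun_minkowski_sum:
  assumes "bounded A" "bounded B" "A \<noteq> {}" "B \<noteq> {}"
  shows "support_fun (minkowski_sum A B) x = support_fun A x + support_fun B x"
proof -
  note bdd = bdd_above_inner_image[where x = x]
  have sum_UN: "minkowski_sum A B = (\<Union>a\<in>A. (\<lambda>b. a + b) ` B)"
    unfolding minkowski_sum_def by auto
  have "bdd_above (\<Union>a\<in>A. (\<lambda>z. z \<bullet> x) ` (\<lambda>b. a + b) ` B)"
    using bdd[OF bounded_sums[OF assms(1,2)]] unfolding minkowski_sum_eq_UN[symmetric] sum_UN image_UN .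
  then have "support_fun (minkowski_sum A B) x = (SUP a\<in>A. SUP b\<in>B. a \<bullet> x + b \<bullet> x)"
    unfolding support_fun_def sum_UN using assms(3,4)
    by (subst cSUP_UNION) (auto simp: image_image inner_add_left)
  also have "\<dots> = (SUP a\<in>A. a \<bullet> x + support_fun B x)"
    unfolding support_fun_def using Sup_add_eq bdd assms by metis
  also have "\<dots> = (SUP a\<in>A. support_fun B x + a \<bullet> x)"
    by (simp add: add.commute)
  also have "\<dots> = support_fun B x + support_fun A x"
    unfolding support_fun_def[of A] using bdd assms by (intro Sup_add_eq) auto
  finally show ?thesis by simp
qed

lemma support_fun_scaling:
  assumes "bounded B" "B \<noteq> {}" "0 \<le> c"
  shows "support_fun ((\<lambda>b. c *\<^sub>R b) ` B) x = c * support_fun B x"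
proof -
  have "c * support_fun B x = (SUP b\<in>B. c * (b \<bullet> x))"
    unfolding support_fun_def using bdd_above_inner_image[OF assms(1)] assms(2,3)
    by (subst continuous_at_Sup_mono) (auto simp: mono_def mult_left_mono continuous_intros image_image)
  then show ?thesis
    unfolding support_fun_def by (simp add: image_image)
qed

lemma support_fun_le_imp_subset:
  assumes "bounded C" "closed D" "convex D" "D \<noteq> {}"
    and le: "\<And>x. support_fun C x \<le> support_fun D x"
  shows "C \<subseteq> D"
proof
  fix z assume "z \<in> C"
  show "z \<in> D"
  proof (rule ccontr)
    assume "z \<notin> D"
    then obtain a b where "a \<bullet> z < b" and D_above: "\<forall>y\<in>D. b < a \<bullet> y"
      using separating_hyperplane_closed_point assms(2,3) by blast
    have "z \<bullet> -a \<le> support_fun C (-a)"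
      unfolding support_fun_def
      by (rule cSUP_upper[OF \<open>z \<in> C\<close> bdd_above_inner_image[OF assms(1)]])
    also have "\<dots> \<le> support_fun D (-a)" by (rule le)
    also have "\<dots> \<le> - b"
      unfolding support_fun_def using assms(4) D_above
      by (intro cSUP_least) (auto simp: inner_commute less_imp_le)
    finally show False using \<open>a \<bullet> z < b\<close> by (simp add: inner_commute)
  qed
qed

lemma convex_body_eqI_support_fun:
  assumes "convex_body C" "convex_body D" "support_fun C = support_fun D"
  shows "C = D"
  using assms support_fun_le_imp_subset unfolding convex_body_def by (metis order.refl subset_antisym)

lemma mem_support_funs_iff: "h \<in> support_funs \<longleftrightarrow> (\<exists>C. convex_body C \<and> support_fun C = h)"
  unfolding support_funs_def by blast

lemma is_summand_iff_scaled_complement: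
  assumes "c \<noteq> 0"
  shows "is_summand L K \<longleftrightarrow> (\<exists>C. convex_body C \<and> minkowski_sum L ((\<lambda>y. c *\<^sub>R y) ` C) = K)"
proof
  assume "is_summand L K"
  then obtain M where "convex_body M" "minkowski_sum L M = K"
    unfolding is_summand_def by blast
  moreover have "(\<lambda>y. c *\<^sub>R y) ` (\<lambda>y. inverse c *\<^sub>R y) ` M = M"
    using assms by (simp add: image_image)
  ultimately show "\<exists>C. convex_body C \<and> minkowski_sum L ((\<lambda>y. c *\<^sub>R y) ` C) = K"
    by (metis convex_body_scaling)
next
  assume "\<exists>C. convex_body C \<and> minkowski_sum L ((\<lambda>y. c *\<^sub>R y) ` C) = K"
  then show "is_summand L K"
    unfolding is_summand_def by (metis convex_body_scaling)
qed

lemma minkowski_sum_scaling_eq_iff_support_fun: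
  assumes "convex_body A" "convex_body B" "convex_body C" "0 \<le> c" "0 \<le> d"
  shows "minkowski_sum ((\<lambda>y. c *\<^sub>R y) ` B) ((\<lambda>y. d *\<^sub>R y) ` C) = A \<longleftrightarrow>
         support_fun A = (\<lambda>x. c * support_fun B x + d * support_fun C x)"
proof -
  let ?K = "minkowski_sum ((\<lambda>y. c *\<^sub>R y) ` B) ((\<lambda>y. d *\<^sub>R y) ` C)"
  have "convex_body ?K"
    using assms by (intro convex_body_minkowski_sum convex_body_scaling)
  moreover have "support_fun ?K = (\<lambda>x. c * support_fun B x + d * support_fun C x)"
    using assms convex_body_scaling[of B c] convex_body_scaling[of C d]
    by (intro ext) (simp add: convex_body_def support_fun_minkowski_sum support_fun_scaling)
  ultimately show ?thesis
    using assms(1) convex_body_eqI_support_fun by metis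
qed

lemma ex_neg_iff_ex_unit_interval:
  "(\<exists>t::real. t < 0 \<and> P t) \<longleftrightarrow> (\<exists>e. 0 < e \<and> e < 1 \<and> P (- e / (1 - e)))"
proof
  assume "\<exists>t. t < 0 \<and> P t"
  then obtain t where "t < 0" "P t" by blast
  define e where "e = - t / (1 - t)"
  have "- e / (1 - e) = t"
    using \<open>t < 0\<close> unfolding e_def by (simp add: divide_simps)
  moreover have "0 < e" "e < 1"
    using \<open>t < 0\<close> unfolding e_def by (simp_all add: divide_simps)
  ultimately show "\<exists>e. 0 < e \<and> e < 1 \<and> P (- e / (1 - e))"
    using \<open>P t\<close> by auto
next
  assume "\<exists>e. 0 < e \<and> e < 1 \<and> P (- e / (1 - e))"
  then obtain e where "0 < e" "e < 1" "P (- e / (1 - e))" by blast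
  then show "\<exists>t. t < 0 \<and> P t"
    by (intro exI[of _ "- e / (1 - e)"]) simp
qed

lemma extrapolation_iff_interpolation:
  fixes f g h :: "'a \<Rightarrow> real"
  assumes "e < 1" "t = - e / (1 - e)"
  shows "h = (\<lambda>x. (1 - t) * f x + t * g x) \<longleftrightarrow> f = (\<lambda>x. e * g x + (1 - e) * h x)"
proof -
  have "(1 - e) * (1 - t) = 1" "(1 - e) * t = - e"
    using assms by (simp_all add: field_simps)
  then have scaled: "(1 - e) * ((1 - t) * a + t * b) = a - e * b" for a b
    by (simp add: distrib_left flip: mult.assoc)
  have "h x = (1 - t) * f x + t * g x \<longleftrightarrow> f x = e * g x + (1 - e) * h x" for x
  proof -
    have "h x = (1 - t) * f x + t * g x \<longleftrightarrow> (1 - e) * h x = (1 - e) * ((1 - t) * f x + t * g x)"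
      using assms(1) by simp
    also have "\<dots> \<longleftrightarrow> f x = e * g x + (1 - e) * h x"
      unfolding scaled by linarith
    finally show ?thesis .
  qed
  then show ?thesis
    unfolding fun_eq_iff by blast
qed

lemma extrapolated_support_fun_iff_is_summand:
  assumes "convex_body A" "convex_body B" "0 < e" "e < 1" "t = - e / (1 - e)"
  shows "(\<lambda>x. (1 - t) * support_fun A x + t * support_fun B x) \<in> support_funs \<longleftrightarrow>
         is_summand ((\<lambda>b. e *\<^sub>R b) ` B) A"
proof -
  have summand_iff: "minkowski_sum ((\<lambda>b. e *\<^sub>R b) ` B) ((\<lambda>c. (1 - e) *\<^sub>R c) ` C) = A \<longleftrightarrow>
      support_fun A = (\<lambda>x. e * support_fun B x + (1 - e) * support_fun C x)"
    if "convex_body C" for C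
    using minkowski_sum_scaling_eq_iff_support_fun[OF assms(1,2) that] assms(3,4) by simp
  have "(\<lambda>x. (1 - t) * support_fun A x + t * support_fun B x) \<in> support_funs \<longleftrightarrow>
        (\<exists>C. convex_body C \<and> support_fun C = (\<lambda>x. (1 - t) * support_fun A x + t * support_fun B x))"
    by (rule mem_support_funs_iff)
  also have "\<dots> \<longleftrightarrow> (\<exists>C. convex_body C \<and>
      support_fun A = (\<lambda>x. e * support_fun B x + (1 - e) * support_fun C x))"
    by (intro ex_cong extrapolation_iff_interpolation[OF assms(4,5)])
  also have "\<dots> \<longleftrightarrow> (\<exists>C. convex_body C \<and>
      minkowski_sum ((\<lambda>b. e *\<^sub>R b) ` B) ((\<lambda>c. (1 - e) *\<^sub>R c) ` C) = A)"
    using summand_iff by blast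
  also have "\<dots> \<longleftrightarrow> is_summand ((\<lambda>b. e *\<^sub>R b) ` B) A"
    using assms(4) by (simp add: is_summand_iff_scaled_complement[of "1 - e"])
  finally show ?thesis .
qed

theorem proposition3:
  fixes A B :: "'a::euclidean_space set"
  assumes "convex_body A" and "convex_body B"
  shows "is_endpoint A B \<longleftrightarrow>
         (\<forall>\<epsilon>::real. 0 < \<epsilon> \<and> \<epsilon> < 1 \<longrightarrow> \<not> is_summand ((\<lambda>b. \<epsilon> *\<^sub>R b) ` B) A)"
  unfolding is_endpoint_def ex_neg_iff_ex_unit_interval
  using extrapolated_support_fun_iff_is_summand[OF assms _ _ refl] by blast

end
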